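(* For any $k\in\mathbb{N}$, there exists a simple connected graph $G$ with at least one edge such that $src(G)-\max(\mathrm{diam}(G),\omega'(G))\geq k$.
   Context: An edge coloring of $G$ is any function $f:E(G)\to\{1,\dots,k\}$ (adjacent edges may share a color). A path is rainbow if its edges receive pairwise distinct colors. $src(G)$ is the minimum number of colors in an edge coloring such that every pair of distinct vertices is joined by a rainbow shortest path. For distinct $u_1,u_2\in V(G)$, an edge $e$ separates $u_1,u_2$ if $e$ lies on every shortest $(u_1,u_2)$-path. The auxiliary graph $H(G)$ has vertex set $E(G)$, with distinct $e_1,e_2$ adjacent iff some pair of distinct vertices is separated by both. $\omega'(G)$ is the clique number of $H(G)$; $\mathrm{diam}(G)$ is the diameter of $G$. *)

theory Defs
  imports Main
begin

definition simple_graph :: "'a set \<Rightarrow> 'a set set \<Rightarrow> bool" where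
  "simple_graph V E \<longleftrightarrow> finite V \<and>
     (\<forall>e\<in>E. \<exists>u v. u \<in> V \<and> v \<in> V \<and> u \<noteq> v \<and> e = {u, v})"

definition is_path :: "'a set \<Rightarrow> 'a set set \<Rightarrow> 'a list \<Rightarrow> bool" where
  "is_path V E P \<longleftrightarrow> P \<noteq> [] \<and> set P \<subseteq> V \<and> distinct P \<and>
     (\<forall>i. Suc i < length P \<longrightarrow> {P ! i, P ! Suc i} \<in> E)"

definition path_edges :: "'a list \<Rightarrow> 'a set list" where
  "path_edges P = map (\<lambda>i. {P ! i, P ! Suc i}) [0..<length P - 1]"

definition is_uv_path :: "'a set \<Rightarrow> 'a set set \<Rightarrow> 'a \<Rightarrow> 'a \<Rightarrow> 'a list \<Rightarrow> bool" where
  "is_uv_path V E u v P \<longleftrightarrow> is_path V E P \<and> hd P = u \<and> last P = v"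

definition connected_graph :: "'a set \<Rightarrow> 'a set set \<Rightarrow> bool" where
  "connected_graph V E \<longleftrightarrow> (\<forall>u\<in>V. \<forall>v\<in>V. \<exists>P. is_uv_path V E u v P)"

definition dist :: "'a set \<Rightarrow> 'a set set \<Rightarrow> 'a \<Rightarrow> 'a \<Rightarrow> nat" where
  "dist V E u v = (LEAST n. \<exists>P. is_uv_path V E u v P \<and> length P = Suc n)"

definition is_shortest_path :: "'a set \<Rightarrow> 'a set set \<Rightarrow> 'a \<Rightarrow> 'a \<Rightarrow> 'a list \<Rightarrow> bool" where
  "is_shortest_path V E u v P \<longleftrightarrow> is_uv_path V E u v P \<and>
     (\<forall>Q. is_uv_path V E u v Q \<longrightarrow> length P \<le> length Q)"

definition diam :: "'a set \<Rightarrow> 'a set set \<Rightarrow> nat" where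
  "diam V E = Max {dist V E u v | u v. u \<in> V \<and> v \<in> V}"

definition rainbow :: "('a set \<Rightarrow> nat) \<Rightarrow> 'a list \<Rightarrow> bool" where
  "rainbow f P \<longleftrightarrow> distinct (map f (path_edges P))"

definition strong_rainbow_coloring :: "'a set \<Rightarrow> 'a set set \<Rightarrow> nat \<Rightarrow> ('a set \<Rightarrow> nat) \<Rightarrow> bool" where
  "strong_rainbow_coloring V E k f \<longleftrightarrow> (\<forall>e\<in>E. f e \<in> {1..k}) \<and>
     (\<forall>u\<in>V. \<forall>v\<in>V. u \<noteq> v \<longrightarrow> (\<exists>P. is_shortest_path V E u v P \<and> rainbow f P))"

definition src :: "'a set \<Rightarrow> 'a set set \<Rightarrow> nat" where
  "src V E = (LEAST k. \<exists>f. strong_rainbow_coloring V E k f)"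

definition separates :: "'a set \<Rightarrow> 'a set set \<Rightarrow> 'a set \<Rightarrow> 'a \<Rightarrow> 'a \<Rightarrow> bool" where
  "separates V E e u v \<longleftrightarrow>
     (\<forall>P. is_shortest_path V E u v P \<longrightarrow> e \<in> set (path_edges P))"

definition H_adj :: "'a set \<Rightarrow> 'a set set \<Rightarrow> 'a set \<Rightarrow> 'a set \<Rightarrow> bool" where
  "H_adj V E e1 e2 \<longleftrightarrow> e1 \<in> E \<and> e2 \<in> E \<and> e1 \<noteq> e2 \<and>
     (\<exists>u\<in>V. \<exists>v\<in>V. u \<noteq> v \<and> separates V E e1 u v \<and> separates V E e2 u v)"

definition H_clique :: "'a set \<Rightarrow> 'a set set \<Rightarrow> 'a set set \<Rightarrow> bool" where
  "H_clique V E C \<longleftrightarrow> C \<subseteq> E \<and> (\<forall>e1\<in>C. \<forall>e2\<in>C. e1 \<noteq> e2 \<longrightarrow> H_adj V E e1 e2)"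

definition omega' :: "'a set \<Rightarrow> 'a set set \<Rightarrow> nat" where
  "omega' V E = Max {card C | C. H_clique V E C}"

end

theory Submission
  imports Defs
begin

text \<open>The witness is the complete bipartite graph K_{2,n} with parts {0, 1} and
  {2, ..., n + 1}. Its diameter is 2. Two adjacent vertices are joined only by their edge, and two
  non-adjacent ones have at least two common neighbours, so no edge lies on all their shortest
  paths; hence an edge only separates its own endpoints and \<omega>' \<le> 1. On the other hand, the
  shortest paths between two vertices x, y of the large part are exactly x-0-y and x-1-y, so in a
  strong rainbow colouring with K colours the colour pairs (f{0,x}, f{1,x}) are pairwise distinct
  and n \<le> K^2. Taking n = (k + 2)^2 gives src \<ge> k + 2.\<close>

lemma is_uv_path_singleton: "u \<in> V \<Longrightarrow> is_uv_path V E u u [u]"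
  by (simp add: is_uv_path_def is_path_def)

lemma is_uv_path_edge:
  "\<lbrakk>u \<in> V; v \<in> V; u \<noteq> v; {u, v} \<in> E\<rbrakk> \<Longrightarrow> is_uv_path V E u v [u, v]"
  by (simp add: is_uv_path_def is_path_def less_Suc_eq)

lemma is_uv_path_two_edges:
  "\<lbrakk>u \<in> V; w \<in> V; v \<in> V; distinct [u, w, v]; {u, w} \<in> E; {w, v} \<in> E\<rbrakk>
   \<Longrightarrow> is_uv_path V E u v [u, w, v]"
  by (auto simp: is_uv_path_def is_path_def less_Suc_eq nth_Cons')

lemma path_edges_edge: "path_edges [u, v] = [{u, v}]"
  by (simp add: path_edges_def)

lemma path_edges_two_edges: "path_edges [u, w, v] = [{u, w}, {w, v}]"
  by (simp add: path_edges_def upt_rec)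

lemma is_uv_path_length_ge2:
  assumes "is_uv_path V E u v P" "u \<noteq> v"
  shows "2 \<le> length P"
  using assms by (cases P rule: remdups_adj.cases) (auto simp: is_uv_path_def is_path_def)

lemma is_uv_path_length_2:
  assumes "is_uv_path V E u v P" "length P = 2"
  shows "P = [u, v] \<and> {u, v} \<in> E"
proof -
  obtain x y where "P = [x, y]"
    using assms(2) by (auto simp: numeral_2_eq_2 length_Suc_conv)
  with assms(1) show ?thesis by (fastforce simp: is_uv_path_def is_path_def)
qed

lemma is_uv_path_length_3:
  assumes "is_uv_path V E u v P" "length P = 3"
  shows "\<exists>w. P = [u, w, v] \<and> {u, w} \<in> E \<and> {w, v} \<in> E"
proof -
  obtain x y z where "P = [x, y, z]"
    using assms(2) by (auto simp: numeral_3_eq_3 length_Suc_conv)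
  with assms(1) show ?thesis by (fastforce simp: is_uv_path_def is_path_def)
qed

lemma is_uv_path_length_ge3:
  assumes "is_uv_path V E u v P" "u \<noteq> v" "{u, v} \<notin> E"
  shows "3 \<le> length P"
  using is_uv_path_length_ge2[OF assms(1,2)] is_uv_path_length_2[OF assms(1)] assms(3)
  by (cases "length P = 2") auto

lemma distinct_path_edges: "distinct P \<Longrightarrow> distinct (path_edges P)"
  by (auto simp: path_edges_def distinct_conv_nth doubleton_eq_iff nth_eq_iff_index_eq)

lemma is_uv_path_endpoints:
  assumes "is_uv_path V E u v P"
  shows "u \<in> V" "v \<in> V"
  using assms hd_in_set[of P] last_in_set[of P] by (auto simp: is_uv_path_def is_path_def)

lemma edge_is_shortest_path:
  "\<lbrakk>u \<in> V; v \<in> V; u \<noteq> v; {u, v} \<in> E\<rbrakk> \<Longrightarrow> is_shortest_path V E u v [u, v]"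
  using is_uv_path_length_ge2[of V E u v] is_uv_path_edge[of u V v E]
  by (fastforce simp: is_shortest_path_def numeral_2_eq_2)

lemma two_step_is_shortest_path:
  "\<lbrakk>u \<in> V; w \<in> V; v \<in> V; distinct [u, w, v]; {u, w} \<in> E; {w, v} \<in> E; {u, v} \<notin> E\<rbrakk>
   \<Longrightarrow> is_shortest_path V E u v [u, w, v]"
  using is_uv_path_length_ge3[of V E u v] is_uv_path_two_edges[of u V w v E]
  by (fastforce simp: is_shortest_path_def numeral_3_eq_3)

lemma ex_shortest_path:
  assumes "is_uv_path V E u v P"
  shows "\<exists>Q. is_shortest_path V E u v Q"
proof -
  obtain Q where "is_uv_path V E u v Q"
    and "\<And>Q'. is_uv_path V E u v Q' \<Longrightarrow> length Q \<le> length Q'"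
    using ex_has_least_nat[of "is_uv_path V E u v" P length] assms by blast
  then show ?thesis by (auto simp: is_shortest_path_def)
qed

lemma dist_le_length: "is_uv_path V E u v P \<Longrightarrow> dist V E u v \<le> length P - 1"
  unfolding dist_def
  by (rule Least_le) (auto simp: is_uv_path_def is_path_def)

lemma diam_le:
  assumes "finite V" "V \<noteq> {}" "\<And>u v. \<lbrakk>u \<in> V; v \<in> V\<rbrakk> \<Longrightarrow> dist V E u v \<le> d"
  shows "diam V E \<le> d"
proof -
  have "{dist V E u v | u v. u \<in> V \<and> v \<in> V} = (\<lambda>(u, v). dist V E u v) ` (V \<times> V)"
    by auto
  with assms show ?thesis by (auto simp: diam_def)
qed

lemma separates_edge:
  assumes "u \<in> V" "v \<in> V" "u \<noteq> v" "{u, v} \<in> E" "separates V E e u v"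
  shows "e = {u, v}"
proof -
  have "e \<in> set (path_edges [u, v])"
    using assms edge_is_shortest_path[OF assms(1-4)] by (simp add: separates_def)
  then show ?thesis by (simp add: path_edges_edge)
qed

lemma not_separates_two_common_neighbours:
  assumes "u \<in> V" "v \<in> V" "{u, v} \<notin> E"
    and "w1 \<in> V" "w2 \<in> V" "distinct [u, v, w1, w2]"
    and "{u, w1} \<in> E" "{w1, v} \<in> E" "{u, w2} \<in> E" "{w2, v} \<in> E"
  shows "\<not> separates V E e u v"
proof
  assume sep: "separates V E e u v"
  have "is_shortest_path V E u v [u, w1, v]" "is_shortest_path V E u v [u, w2, v]"
    using assms by (auto intro!: two_step_is_shortest_path)
  then have "e \<in> set (path_edges [u, w1, v])" "e \<in> set (path_edges [u, w2, v])"
    using sep unfolding separates_def by blast+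
  with assms(6) show False by (auto simp: path_edges_two_edges doubleton_eq_iff)
qed

lemma omega'_le_1:
  assumes "finite E"
    and "\<And>e u v. \<lbrakk>u \<in> V; v \<in> V; u \<noteq> v; separates V E e u v\<rbrakk> \<Longrightarrow> e = {u, v}"
  shows "omega' V E \<le> 1"
proof -
  have "card C \<le> 1" if C: "H_clique V E C" for C
  proof -
    have "C \<subseteq> E" using C by (simp add: H_clique_def)
    then have "finite C" using assms(1) by (rule finite_subset)
    moreover have "e1 = e2" if "e1 \<in> C" "e2 \<in> C" for e1 e2
    proof (rule ccontr)
      assume "e1 \<noteq> e2"
      with C that obtain u v where "u \<in> V" "v \<in> V" "u \<noteq> v"
        "separates V E e1 u v" "separates V E e2 u v"
        unfolding H_clique_def H_adj_def by blast
      then have "e1 = {u, v}" "e2 = {u, v}" using assms(2) by blast+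
      with \<open>e1 \<noteq> e2\<close> show False by simp
    qed
    ultimately show ?thesis by (simp add: card_le_Suc0_iff_eq)
  qed
  moreover have "{card C | C. H_clique V E C} \<subseteq> card ` Pow E"
    by (auto simp: H_clique_def)
  then have "finite {card C | C. H_clique V E C}"
    using assms(1) by (meson finite_Pow_iff finite_imageI finite_subset)
  moreover have "H_clique V E {}" by (simp add: H_clique_def)
  ultimately show ?thesis unfolding omega'_def by (subst Max_le_iff) auto
qed

lemma ex_strong_rainbow_coloring:
  assumes "connected_graph V E" "finite E"
  shows "\<exists>f. strong_rainbow_coloring V E (card E) f"
proof -
  obtain h where h: "bij_betw h E {0..<card E}"
    using ex_bij_betw_finite_nat[OF assms(2)] by blast
  have "rainbow (\<lambda>e. h e + 1) P" if "is_shortest_path V E u v P" for u v P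
  proof -
    have "distinct (path_edges P)" "set (path_edges P) \<subseteq> E"
      using that distinct_path_edges
      by (auto simp: is_shortest_path_def is_uv_path_def is_path_def path_edges_def)
    moreover have "inj_on (\<lambda>e. h e + 1) E" using h by (simp add: bij_betw_def inj_on_def)
    ultimately show ?thesis by (simp add: rainbow_def distinct_map inj_on_subset)
  qed
  moreover have "\<exists>P. is_shortest_path V E u v P" if "u \<in> V" "v \<in> V" for u v
    using assms(1) that ex_shortest_path by (meson connected_graph_def)
  moreover have "h e + 1 \<in> {1..card E}" if "e \<in> E" for e
    using bij_betwE[OF h] that by (simp add: Suc_le_eq)
  ultimately show ?thesis
    unfolding strong_rainbow_coloring_def by (intro exI[of _ "\<lambda>e. h e + 1"]) blast
qed

lemma strong_rainbow_coloring_src: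
  assumes "strong_rainbow_coloring V E K f"
  obtains g where "strong_rainbow_coloring V E (src V E) g"
proof -
  have "\<exists>g. strong_rainbow_coloring V E (LEAST K. \<exists>f. strong_rainbow_coloring V E K f) g"
    by (rule LeastI_ex) (use assms in blast)
  then show ?thesis using that by (auto simp: src_def)
qed

lemma shortest_path_two_step:
  assumes "is_shortest_path V E u v P" "{u, v} \<notin> E"
    and "w \<in> V" "distinct [u, w, v]" "{u, w} \<in> E" "{w, v} \<in> E"
  obtains w' where "P = [u, w', v]" "{u, w'} \<in> E" "{w', v} \<in> E"
proof -
  have P: "is_uv_path V E u v P" using assms(1) by (simp add: is_shortest_path_def)
  have "u \<in> V" "v \<in> V" using is_uv_path_endpoints[OF P] .
  then have "length P \<le> 3"
    using assms two_step_is_shortest_path[of u V w v E]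
    by (fastforce simp: is_shortest_path_def)
  moreover have "3 \<le> length P"
    using is_uv_path_length_ge3[OF P _ assms(2)] assms(4) by simp
  ultimately have "length P = 3" by simp
  with is_uv_path_length_3[OF P] that show ?thesis by blast
qed

definition K2n_vertices :: "nat \<Rightarrow> nat set" where
  "K2n_vertices n = {..<n + 2}"

definition K2n_edges :: "nat \<Rightarrow> nat set set" where
  "K2n_edges n = {{i, j} | i j. i < 2 \<and> 2 \<le> j \<and> j < n + 2}"

lemma K2n_vertices_iff [simp]: "x \<in> K2n_vertices n \<longleftrightarrow> x < n + 2"
  by (simp add: K2n_vertices_def)

lemma K2n_edge_iff [simp]:
  "{u, v} \<in> K2n_edges n \<longleftrightarrow> (u < 2 \<and> 2 \<le> v \<and> v < n + 2) \<or> (v < 2 \<and> 2 \<le> u \<and> u < n + 2)"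
  by (auto simp: K2n_edges_def doubleton_eq_iff)

lemma simple_graph_K2n: "simple_graph (K2n_vertices n) (K2n_edges n)"
  unfolding simple_graph_def
proof
  show "\<forall>e\<in>K2n_edges n. \<exists>u v. u \<in> K2n_vertices n \<and> v \<in> K2n_vertices n \<and> u \<noteq> v \<and> e = {u, v}"
  proof
    fix e assume "e \<in> K2n_edges n"
    then obtain i j where "e = {i, j}" "i < 2" "2 \<le> j" "j < n + 2"
      by (auto simp: K2n_edges_def)
    then show "\<exists>u v. u \<in> K2n_vertices n \<and> v \<in> K2n_vertices n \<and> u \<noteq> v \<and> e = {u, v}"
      by (intro exI[of _ i] exI[of _ j]) simp
  qed
qed (simp add: K2n_vertices_def)

lemma finite_K2n_edges: "finite (K2n_edges n)"
  by (rule finite_subset[of _ "Pow (K2n_vertices n)"]) (auto simp: K2n_edges_def K2n_vertices_def)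

lemma K2n_edges_nonempty:
  assumes "0 < n"
  shows "K2n_edges n \<noteq> {}"
proof -
  from assms have "{0, 2} \<in> K2n_edges n" by simp
  then show ?thesis by blast
qed

lemma K2n_common_neighbours:
  assumes "2 \<le> n" "u \<in> K2n_vertices n" "v \<in> K2n_vertices n" "u \<noteq> v" "{u, v} \<notin> K2n_edges n"
  obtains w1 w2 where "w1 \<in> K2n_vertices n" "w2 \<in> K2n_vertices n" "distinct [u, v, w1, w2]"
    "{u, w1} \<in> K2n_edges n" "{w1, v} \<in> K2n_edges n"
    "{u, w2} \<in> K2n_edges n" "{w2, v} \<in> K2n_edges n"
proof (cases "u < 2")
  case True
  with assms have "v < 2" by auto
  with True assms that[of 2 3] show ?thesis by auto
next
  case False
  with assms have "\<not> v < 2" by auto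
  with False assms that[of 0 1] show ?thesis by auto
qed

lemma K2n_short_path:
  assumes "2 \<le> n" "u \<in> K2n_vertices n" "v \<in> K2n_vertices n"
  obtains P where "is_uv_path (K2n_vertices n) (K2n_edges n) u v P" "length P \<le> 3"
proof -
  consider "u = v" | "u \<noteq> v" "{u, v} \<in> K2n_edges n" | "u \<noteq> v" "{u, v} \<notin> K2n_edges n"
    by blast
  then show ?thesis
  proof cases
    case 1
    with assms that[of "[u]"] show ?thesis by (simp add: is_uv_path_singleton)
  next
    case 2
    with assms that[of "[u, v]"] show ?thesis by (simp add: is_uv_path_edge)
  next
    case 3
    with assms obtain w where "w \<in> K2n_vertices n" "distinct [u, w, v]"
      "{u, w} \<in> K2n_edges n" "{w, v} \<in> K2n_edges n"
      by (elim K2n_common_neighbours) auto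
    with assms that[of "[u, w, v]"] show ?thesis by (simp add: is_uv_path_two_edges)
  qed
qed

lemma connected_K2n:
  assumes "2 \<le> n"
  shows "connected_graph (K2n_vertices n) (K2n_edges n)"
  unfolding connected_graph_def
proof (intro ballI)
  fix u v assume "u \<in> K2n_vertices n" "v \<in> K2n_vertices n"
  with assms obtain P where "is_uv_path (K2n_vertices n) (K2n_edges n) u v P"
    by (rule K2n_short_path)
  then show "\<exists>P. is_uv_path (K2n_vertices n) (K2n_edges n) u v P" ..
qed

lemma diam_K2n:
  assumes "2 \<le> n"
  shows "diam (K2n_vertices n) (K2n_edges n) \<le> 2"
proof (rule diam_le)
  fix u v assume "u \<in> K2n_vertices n" "v \<in> K2n_vertices n"
  with assms obtain P where P: "is_uv_path (K2n_vertices n) (K2n_edges n) u v P" "length P \<le> 3"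
    by (rule K2n_short_path)
  from dist_le_length[OF P(1)] P(2) show "dist (K2n_vertices n) (K2n_edges n) u v \<le> 2"
    by linarith
qed (auto simp: K2n_vertices_def)

lemma K2n_separates:
  assumes "2 \<le> n" "u \<in> K2n_vertices n" "v \<in> K2n_vertices n" "u \<noteq> v"
    and "separates (K2n_vertices n) (K2n_edges n) e u v"
  shows "e = {u, v}"
proof (cases "{u, v} \<in> K2n_edges n")
  case True
  from separates_edge[OF assms(2-4) True assms(5)] show ?thesis .
next
  case False
  with assms obtain w1 w2 where "w1 \<in> K2n_vertices n" "w2 \<in> K2n_vertices n" "distinct [u, v, w1, w2]"
    "{u, w1} \<in> K2n_edges n" "{w1, v} \<in> K2n_edges n"
    "{u, w2} \<in> K2n_edges n" "{w2, v} \<in> K2n_edges n"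
    by (elim K2n_common_neighbours)
  then have "\<not> separates (K2n_vertices n) (K2n_edges n) e u v"
    by (rule not_separates_two_common_neighbours[OF assms(2,3) False])
  with assms(5) show ?thesis by contradiction
qed

lemma omega'_K2n: "2 \<le> n \<Longrightarrow> omega' (K2n_vertices n) (K2n_edges n) \<le> 1"
  by (rule omega'_le_1[OF finite_K2n_edges K2n_separates])

lemma K2n_strong_rainbow_coloring_bound:
  assumes f: "strong_rainbow_coloring (K2n_vertices n) (K2n_edges n) K f"
  shows "n \<le> K\<^sup>2"
proof -
  let ?V = "K2n_vertices n" and ?E = "K2n_edges n" and ?L = "{2..<n + 2}"
  define colours where "colours x = (f {0, x}, f {1, x})" for x :: nat
  have "colours x \<noteq> colours y" if xy: "x \<in> ?L" "y \<in> ?L" "x \<noteq> y" for x y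
  proof -
    have "x \<in> ?V" "y \<in> ?V" using xy by auto
    with f xy(3) obtain P where P: "is_shortest_path ?V ?E x y P" "rainbow f P"
      unfolding strong_rainbow_coloring_def by blast
    have "{x, y} \<notin> ?E" "0 \<in> ?V" "distinct [x, 0, y]" "{x, 0} \<in> ?E" "{0, y} \<in> ?E"
      using xy by auto
    with P(1) obtain w where w: "P = [x, w, y]" "{x, w} \<in> ?E" "{w, y} \<in> ?E"
      by (rule shortest_path_two_step)
    from w(2) xy(1) have "w = 0 \<or> w = 1" by auto
    moreover have "f {x, w} \<noteq> f {w, y}"
      using P(2) w(1) by (simp add: rainbow_def path_edges_two_edges)
    ultimately show ?thesis by (auto simp: colours_def insert_commute)
  qed
  then have "inj_on colours ?L" by (meson inj_onI)
  moreover have "colours ` ?L \<subseteq> {1..K} \<times> {1..K}"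
    using f by (auto simp: colours_def strong_rainbow_coloring_def)
  ultimately have "card ?L \<le> card ({1..K} \<times> {1..K})"
    by (intro card_inj_on_le) auto
  then show ?thesis by (simp add: card_cartesian_product power2_eq_square)
qed

theorem proposition3:
  fixes k :: nat
  shows "\<exists>(V :: nat set) (E :: nat set set).
           simple_graph V E \<and> connected_graph V E \<and> E \<noteq> {} \<and>
           int (src V E) - int (max (diam V E) (omega' V E)) \<ge> int k"
proof -
  define n where "n = (k + 2)\<^sup>2"
  let ?V = "K2n_vertices n" and ?E = "K2n_edges n"
  have n: "2 \<le> n" by (simp add: n_def power2_eq_square)
  obtain f where "strong_rainbow_coloring ?V ?E (card ?E) f"
    using ex_strong_rainbow_coloring[OF connected_K2n[OF n] finite_K2n_edges] ..
  then obtain g where "strong_rainbow_coloring ?V ?E (src ?V ?E) g"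
    by (rule strong_rainbow_coloring_src)
  then have "(k + 2)\<^sup>2 \<le> (src ?V ?E)\<^sup>2"
    unfolding n_def[symmetric] by (rule K2n_strong_rainbow_coloring_bound)
  then have "k + 2 \<le> src ?V ?E" by (rule power2_le_imp_le) simp
  moreover have "max (diam ?V ?E) (omega' ?V ?E) \<le> 2"
    using diam_K2n[OF n] omega'_K2n[OF n] by simp
  ultimately have "int (src ?V ?E) - int (max (diam ?V ?E) (omega' ?V ?E)) \<ge> int k"
    by linarith
  moreover have "?E \<noteq> {}" using n by (intro K2n_edges_nonempty) simp
  ultimately show ?thesis
    using simple_graph_K2n connected_K2n[OF n] by blast
qed

end
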